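(* The graph $T_6$ is a minimal non-word-representable graph: $T_6$ is not word-representable, but every graph obtained from $T_6$ by deleting one vertex is word-representable.
   Context: A graph $G=(V,E)$ is word-representable if there exists a word $w$ over the alphabet $V$ such that for all distinct $x,y\in V$, the letters $x$ and $y$ alternate in $w$ if and only if $xy\in E$ (alternation meaning that deleting all letters other than $x$ and $y$ leaves $xyxy\cdots$ or $yxyx\cdots$). The graph $T_6$ has vertex set $\{1,\dots,9\}$; the vertices $1,2,3,4,5$ form a clique, the vertices $6,7,8,9$ form an independent set, and the remaining edges are: $6$ is adjacent to $1,2,3$; $7$ is adjacent to $1,2$; $8$ is adjacent to $1,4$; $9$ is adjacent to $2,5$. *)

theory Defs
  imports Main
begin

definition alternate :: "'a list \<Rightarrow> 'a \<Rightarrow> 'a \<Rightarrow> bool" where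
  "alternate w x y \<longleftrightarrow>
     (let u = filter (\<lambda>z. z = x \<or> z = y) w in
        \<forall>i. Suc i < length u \<longrightarrow> u ! i \<noteq> u ! Suc i)"

text \<open>A (simple) graph is given by a vertex set V and a symmetric adjacency
  relation E; only pairs of vertices of V are considered, so the graph with
  vertex set V' \<subseteq> V and relation E is the induced subgraph on V'.\<close>
definition word_representable :: "'a set \<Rightarrow> ('a \<Rightarrow> 'a \<Rightarrow> bool) \<Rightarrow> bool" where
  "word_representable V E \<longleftrightarrow>
     (\<exists>w. set w = V \<and>
        (\<forall>x\<in>V. \<forall>y\<in>V. x \<noteq> y \<longrightarrow> (alternate w x y \<longleftrightarrow> E x y)))"

definition T6_V :: "nat set" where
  "T6_V = {1..9}"

definition T6_edges :: "(nat \<times> nat) set" where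
  "T6_edges = {(x, y). x \<in> {1..5} \<and> y \<in> {1..5} \<and> x \<noteq> y}
     \<union> {(6,1), (6,2), (6,3), (7,1), (7,2), (8,1), (8,4), (9,2), (9,5)}"

definition T6_E :: "nat \<Rightarrow> nat \<Rightarrow> bool" where
  "T6_E x y \<longleftrightarrow> (x, y) \<in> T6_edges \<or> (y, x) \<in> T6_edges"

end

theory Submission
  imports Defs
begin

(* Orient every edge xy of a graph represented by w from the letter whose first occurrence in w
   comes first.  Counting letters in prefixes of w shows that this orientation has no shortcuts:
   a directed path a \<rightarrow> b \<rightarrow> c \<rightarrow> d together with a \<rightarrow> d forces the edges ac and bd.  Hence, if two
   non-adjacent vertices u and v have common neighbours s and t, then u occurs between s and t
   (in the order of first occurrences) if and only if v does.  In T6 this says that 3 and 4 lie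
   on the same side of 1 and 2 (both are joined to 1, 2 but not to 7), 2 and 3 on the same side
   of 1 and 4 (look at 8), 1 and 3 on the same side of 2 and 5 (look at 9), and 4 and 5 on the
   same side of 1 and 3 (look at 6); no ordering of the clique 1, ..., 5 meets all four
   constraints.  Each vertex-deleted subgraph is represented by an explicit word. *)

lemma alternate_iff_distinct_adj:
  "alternate w x y \<longleftrightarrow> distinct_adj (filter (\<lambda>z. z = x \<or> z = y) w)"
  unfolding alternate_def distinct_adj_conv_nth Let_def ..

lemma alternate_sym: "alternate w x y \<longleftrightarrow> alternate w y x"
  unfolding alternate_def by (simp add: disj_commute)

definition leads :: "'a list \<Rightarrow> 'a \<Rightarrow> 'a \<Rightarrow> bool" where
  "leads w x y \<longleftrightarrow>
     (\<forall>n. count_list (take n w) y \<le> count_list (take n w) x \<and>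
          count_list (take n w) x \<le> count_list (take n w) y + 1)"

lemma all_take_Cons:
  "(\<forall>n. P (take n (z # w))) \<longleftrightarrow> P [] \<and> (\<forall>n. P (z # take n w))"
proof
  assume "\<forall>n. P (take n (z # w))"
  then have "P (take 0 (z # w))" "\<And>n. P (take (Suc n) (z # w))"
    by blast+
  then show "P [] \<and> (\<forall>n. P (z # take n w))"
    by simp
qed (auto simp: take_Cons split: nat.split)

lemma leads_Cons:
  assumes "x \<noteq> y"
  shows "leads (z # w) x y \<longleftrightarrow> (if z = x then leads w y x else z \<noteq> y \<and> leads w x y)"
proof (cases "z = y")
  case True
  have "\<not> leads (z # w) x y"
  proof
    assume "leads (z # w) x y"
    then have "count_list (take 1 (z # w)) y \<le> count_list (take 1 (z # w)) x"
      unfolding leads_def by blast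
    then show False
      using True assms by simp
  qed
  then show ?thesis
    using True assms by simp
next
  case False
  then show ?thesis
    using assms all_take_Cons[where
        P = "\<lambda>p. count_list p y \<le> count_list p x \<and> count_list p x \<le> count_list p y + 1"]
    unfolding leads_def by auto
qed

lemma leads_iff_distinct_adj:
  assumes "x \<noteq> y" and "u = filter (\<lambda>z. z = x \<or> z = y) w"
  shows "leads w x y \<longleftrightarrow> distinct_adj u \<and> (u \<noteq> [] \<longrightarrow> hd u = x)"
  using assms
proof (induction w arbitrary: x y u)
  case Nil
  then show ?case
    by (simp add: leads_def)
next
  case (Cons z w)
  let ?u = "filter (\<lambda>z. z = x \<or> z = y) w"
  have swap: "filter (\<lambda>z. z = y \<or> z = x) w = ?u"
    by (rule filter_cong) auto
  have IH: "leads w x y \<longleftrightarrow> distinct_adj ?u \<and> (?u \<noteq> [] \<longrightarrow> hd ?u = x)"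
           "leads w y x \<longleftrightarrow> distinct_adj ?u \<and> (?u \<noteq> [] \<longrightarrow> hd ?u = y)"
    using Cons.IH[of x y] Cons.IH[of y x] Cons.prems(1) swap by simp_all
  have hd_u: "hd ?u = x \<or> hd ?u = y" if "?u \<noteq> []"
    using hd_in_set[OF that] by auto
  consider "z = x" | "z = y" | "z \<noteq> x" "z \<noteq> y"
    by blast
  then show ?case
  proof cases
    case 1
    then have "leads (z # w) x y \<longleftrightarrow> distinct_adj ?u \<and> (?u \<noteq> [] \<longrightarrow> hd ?u = y)"
      using Cons.prems(1) IH(2) by (simp add: leads_Cons)
    also have "\<dots> \<longleftrightarrow> distinct_adj (x # ?u)"
      using Cons.prems(1) hd_u by (auto simp: distinct_adj_Cons)
    finally show ?thesis
      using 1 Cons.prems(2) by simp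
  next
    case 2
    then show ?thesis
      using Cons.prems by (simp add: leads_Cons)
  next
    case 3
    then show ?thesis
      using Cons.prems IH(1) by (simp add: leads_Cons)
  qed
qed

lemma alternate_iff_leads:
  assumes "x \<noteq> y"
  shows "alternate w x y \<longleftrightarrow> leads w x y \<or> leads w y x"
proof -
  let ?u = "filter (\<lambda>z. z = x \<or> z = y) w"
  have "hd ?u = x \<or> hd ?u = y" if "?u \<noteq> []"
    using hd_in_set[OF that] by auto
  moreover have "leads w y x \<longleftrightarrow> distinct_adj ?u \<and> (?u \<noteq> [] \<longrightarrow> hd ?u = y)"
    using assms by (intro leads_iff_distinct_adj) (auto intro: filter_cong)
  ultimately show ?thesis
    using leads_iff_distinct_adj[OF assms refl, of w] unfolding alternate_iff_distinct_adj by blast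
qed

lemma leads_shortcut:
  assumes "leads w a b" "leads w b c" "leads w c d" "leads w a d"
  shows "leads w a c" and "leads w b d"
proof -
  have "count_list (take n w) c \<le> count_list (take n w) a \<and>
        count_list (take n w) a \<le> count_list (take n w) c + 1 \<and>
        count_list (take n w) d \<le> count_list (take n w) b \<and>
        count_list (take n w) b \<le> count_list (take n w) d + 1" for n
    using assms[unfolded leads_def, THEN spec, of n] by linarith
  then show "leads w a c" "leads w b d"
    unfolding leads_def by blast+
qed

definition first_pos :: "'a list \<Rightarrow> 'a \<Rightarrow> nat" where
  "first_pos w x = (LEAST i. i < length w \<and> w ! i = x)"

lemma first_pos_le: "i < length w \<Longrightarrow> w ! i = x \<Longrightarrow> first_pos w x \<le> i"
  unfolding first_pos_def by (rule Least_le) simp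

lemma first_pos_less_length_nth:
  assumes "x \<in> set w"
  shows "first_pos w x < length w \<and> w ! first_pos w x = x"
  using assms unfolding first_pos_def in_set_conv_nth by (rule LeastI_ex)

lemma inj_on_first_pos: "inj_on (first_pos w) (set w)"
  by (metis inj_onI first_pos_less_length_nth)

lemma leads_imp_first_pos_less:
  assumes "leads w x y" "x \<noteq> y" "y \<in> set w"
  shows "first_pos w x < first_pos w y"
proof -
  define k where "k = first_pos w y"
  have "take (Suc k) w = take k w @ [y]"
    using first_pos_less_length_nth[OF assms(3)] by (simp add: k_def take_Suc_conv_app_nth)
  moreover have "count_list (take (Suc k) w) y \<le> count_list (take (Suc k) w) x"
    using assms(1) unfolding leads_def by blast
  ultimately have "x \<in> set (take k w)"
    using assms(2) by (cases "x \<in> set (take k w)") auto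
  then obtain i where "i < k" "i < length w" "w ! i = x"
    by (auto simp: in_set_conv_nth)
  then show ?thesis
    using first_pos_le k_def by fastforce
qed

definition between :: "'a::linorder \<Rightarrow> 'a \<Rightarrow> 'a \<Rightarrow> bool" where
  "between a x b \<longleftrightarrow> a < x \<and> x < b \<or> b < x \<and> x < a"

locale word_representation =
  fixes V :: "'a set" and E :: "'a \<Rightarrow> 'a \<Rightarrow> bool" and w :: "'a list"
  assumes set_word: "set w = V"
    and alternate_iff_edge: "\<lbrakk>x \<in> V; y \<in> V; x \<noteq> y\<rbrakk> \<Longrightarrow> alternate w x y \<longleftrightarrow> E x y"

lemma word_representable_iff: "word_representable V E \<longleftrightarrow> (\<exists>w. word_representation V E w)"
  unfolding word_representable_def word_representation_def by blast

lemma word_representation_by_list_all: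
  assumes "list_all (\<lambda>x. x \<in> set vs) w" "list_all (\<lambda>x. x \<in> set w) vs"
    and "list_all (\<lambda>x. list_all (\<lambda>y. x = y \<or> (alternate w x y \<longleftrightarrow> E x y)) vs) vs"
  shows "word_representation (set vs) E w"
proof
  show "set w = set vs"
    using assms(1,2) by (auto simp: list_all_iff)
  show "alternate w x y \<longleftrightarrow> E x y" if "x \<in> set vs" "y \<in> set vs" "x \<noteq> y" for x y
    using assms(3) that by (auto simp: list_all_iff)
qed

context word_representation
begin

abbreviation pos :: "'a \<Rightarrow> nat" where
  "pos \<equiv> first_pos w"

lemma inj_on_pos: "inj_on pos V"
  using inj_on_first_pos set_word by blast

lemma edge_sym:
  assumes "x \<in> V" "y \<in> V" "x \<noteq> y" "E x y"
  shows "E y x"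
  using assms alternate_iff_edge alternate_sym by metis

lemma leads_imp_edge:
  assumes "x \<in> V" "y \<in> V" "x \<noteq> y" "leads w x y"
  shows "E x y"
  using assms(4) alternate_iff_edge[OF assms(1-3)] alternate_iff_leads[OF assms(3)] by blast

lemma edge_imp_leads:
  assumes "x \<in> V" "y \<in> V" "x \<noteq> y" "E x y" "pos x < pos y"
  shows "leads w x y"
proof -
  have "leads w x y \<or> leads w y x"
    using assms(4) alternate_iff_edge[OF assms(1-3)] alternate_iff_leads[OF assms(3)] by blast
  moreover have "\<not> leads w y x"
    using assms leads_imp_first_pos_less[of w y x] set_word by auto
  ultimately show ?thesis
    by blast
qed

lemma pos_between_transfer:
  assumes V: "{s, t, u, v} \<subseteq> V" and distinct: "distinct [s, t, u, v]"
    and edges: "E s u" "E u t" "E s v" "E v t" and non_edge: "\<not> E u v"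
    and between: "pos s < pos u" "pos u < pos t"
  shows "pos s < pos v \<and> pos v < pos t"
proof -
  have in_V: "s \<in> V" "t \<in> V" "u \<in> V" "v \<in> V"
    using V by auto
  have leads: "leads w x y" if "x \<in> V" "y \<in> V" "E x y \<or> E y x" "pos x < pos y" for x y
  proof -
    have "x \<noteq> y"
      using that(4) by blast
    then show ?thesis
      using that edge_sym edge_imp_leads by blast
  qed
  have "\<not> pos v < pos s"
  proof
    assume "pos v < pos s"
    then have "leads w v s" "leads w s u" "leads w u t" "leads w v t"
      using between edges in_V by (auto intro!: leads)
    then have "leads w v u"
      by (rule leads_shortcut(1))
    then have "E v u"
      using leads_imp_edge[of v u] in_V distinct by auto
    then show False
      using edge_sym non_edge in_V distinct by auto
  qed
  moreover have "\<not> pos t < pos v"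
  proof
    assume "pos t < pos v"
    then have "leads w s u" "leads w u t" "leads w t v" "leads w s v"
      using between edges in_V by (auto intro!: leads)
    then have "leads w u v"
      by (rule leads_shortcut(2))
    then show False
      using leads_imp_edge non_edge in_V distinct by simp
  qed
  moreover have "pos v \<noteq> pos s" "pos v \<noteq> pos t"
    using inj_on_pos in_V distinct by (auto dest: inj_onD)
  ultimately show ?thesis
    by linarith
qed

lemma pos_between_iff:
  assumes V: "{s, t, u, v} \<subseteq> V" and distinct: "distinct [s, t, u, v]"
    and edges: "E s u" "E u t" "E s v" "E v t" and non_edge: "\<not> E u v"
  shows "between (pos s) (pos u) (pos t) \<longleftrightarrow> between (pos s) (pos v) (pos t)"
proof -
  have in_V: "s \<in> V" "t \<in> V" "u \<in> V" "v \<in> V"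
    using V by auto
  have reversed: "E t u" "E u s" "E t v" "E v s" "\<not> E v u"
    using edge_sym[of s u] edge_sym[of u t] edge_sym[of s v] edge_sym[of v t] edge_sym[of v u]
      in_V distinct edges non_edge by auto
  have "{s, t, v, u} \<subseteq> V" "{t, s, u, v} \<subseteq> V" "{t, s, v, u} \<subseteq> V"
       "distinct [s, t, v, u]" "distinct [t, s, u, v]" "distinct [t, s, v, u]"
    using in_V distinct by auto
  then have "pos s < pos u \<and> pos u < pos t \<longleftrightarrow> pos s < pos v \<and> pos v < pos t"
    and "pos t < pos u \<and> pos u < pos s \<longleftrightarrow> pos t < pos v \<and> pos v < pos s"
    using pos_between_transfer[of s t u v] pos_between_transfer[of s t v u]
      pos_between_transfer[of t s u v] pos_between_transfer[of t s v u]
      V distinct edges non_edge reversed by blast+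
  then show ?thesis
    unfolding between_def by blast
qed

end

lemma T6_no_compatible_positions:
  fixes p :: "nat \<Rightarrow> nat"
  assumes inj: "inj_on p T6_V"
    and same_side: "\<And>s t u v. \<lbrakk>{s, t, u, v} \<subseteq> T6_V; distinct [s, t, u, v];
      T6_E s u; T6_E u t; T6_E s v; T6_E v t; \<not> T6_E u v\<rbrakk> \<Longrightarrow>
      between (p s) (p u) (p t) \<longleftrightarrow> between (p s) (p v) (p t)"
  shows False
proof -
  have "between (p 1) (p 3) (p 2) \<longleftrightarrow> between (p 1) (p 4) (p 2)"
    using same_side[of 1 2 3 7] same_side[of 1 2 4 7]
    by (simp add: T6_V_def T6_E_def T6_edges_def)
  moreover have "between (p 1) (p 2) (p 4) \<longleftrightarrow> between (p 1) (p 3) (p 4)"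
    using same_side[of 1 4 2 8] same_side[of 1 4 3 8]
    by (simp add: T6_V_def T6_E_def T6_edges_def)
  moreover have "between (p 2) (p 1) (p 5) \<longleftrightarrow> between (p 2) (p 3) (p 5)"
    using same_side[of 2 5 1 9] same_side[of 2 5 3 9]
    by (simp add: T6_V_def T6_E_def T6_edges_def)
  moreover have "between (p 1) (p 4) (p 3) \<longleftrightarrow> between (p 1) (p 5) (p 3)"
    using same_side[of 1 3 4 6] same_side[of 1 3 5 6]
    by (simp add: T6_V_def T6_E_def T6_edges_def)
  moreover have "inj_on p {1, 2, 3, 4, 5}"
    using inj by (rule inj_on_subset) (auto simp: T6_V_def)
  then have "distinct [p 1, p 2, p 3, p 4, p 5]"
    using distinct_map[of p "[1, 2, 3, 4, 5]"] by simp
  ultimately show False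
    unfolding between_def by (smt (verit, best) distinct_length_2_or_more not_less_iff_gr_or_eq)
qed

lemma T6_not_word_representable: "\<not> word_representable T6_V T6_E"
proof
  assume "word_representable T6_V T6_E"
  then obtain w where "word_representation T6_V T6_E w"
    using word_representable_iff by blast
  then interpret word_representation T6_V T6_E w .
  show False
    using T6_no_compatible_positions[OF inj_on_pos pos_between_iff] by blast
qed

lemma T6_V_eq: "T6_V = set [1, 2, 3, 4, 5, 6, 7, 8, 9]"
  unfolding T6_V_def by auto

definition T6_deletion_words :: "(nat \<times> nat list) list" where
  "T6_deletion_words =
    [(1, [8, 3, 9, 2, 5, 9, 4, 6, 3, 7, 2, 7, 6, 5, 8, 4]),
     (2, [4, 8, 5, 6, 3, 1, 6, 4, 9, 5, 9, 3, 8, 7, 1, 7]),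
     (3, [7, 4, 9, 5, 2, 9, 8, 1, 4, 8, 5, 7, 6, 2, 1, 6]),
     (4, [6, 3, 7, 8, 1, 8, 2, 7, 6, 5, 3, 1, 9, 2, 5, 9]),
     (5, [4, 3, 2, 8, 1, 4, 8, 6, 3, 7, 9, 2, 9, 1, 7, 6]),
     (6, [9, 3, 4, 7, 1, 2, 7, 5, 3, 8, 4, 1, 8, 9, 2, 5]),
     (7, [6, 2, 3, 1, 6, 4, 9, 5, 2, 9, 3, 8, 1, 4, 8, 5]),
     (8, [5, 2, 9, 1, 3, 4, 5, 6, 7, 2, 1, 7, 3, 6, 4, 9]),
     (9, [2, 8, 1, 4, 8, 5, 6, 3, 7, 2, 1, 7, 6, 4, 5, 3])]"

lemma T6_deletion_words_represent:
  "list_all (\<lambda>(v, w). word_representation (T6_V - {v}) T6_E w) T6_deletion_words"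
  unfolding T6_V_eq set_removeAll[symmetric] T6_deletion_words_def list.pred_inject prod.case
  by (intro conjI list.pred_inject(1); rule word_representation_by_list_all;
      simp add: alternate_iff_distinct_adj T6_E_def T6_edges_def)

lemma T6_minus_vertex_representable:
  assumes "v \<in> T6_V"
  shows "word_representable (T6_V - {v}) T6_E"
proof -
  have "v \<in> fst ` set T6_deletion_words"
    using assms unfolding T6_V_eq T6_deletion_words_def by simp
  then obtain w where "(v, w) \<in> set T6_deletion_words"
    by force
  then have "word_representation (T6_V - {v}) T6_E w"
    using T6_deletion_words_represent by (fastforce simp: list_all_iff)
  then show ?thesis
    using word_representable_iff by blast
qed

theorem theorem14:
  shows "\<not> word_representable T6_V T6_E \<and>
         (\<forall>v\<in>T6_V. word_representable (T6_V - {v}) T6_E)"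
  using T6_not_word_representable T6_minus_vertex_representable by blast

end
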